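(* Let $G$ be a simple graph. (1) If $\mathcal{B}$ is a strongly disjoint set of bouquets of $G$ of type $(i,j)$, then $\mathcal{E}(\mathcal{B})$ is a self disjoint set in $G$ of type $(i,i+j)$. Conversely, if $\mathcal{S}$ is a self disjoint set in $G$ of type $(i,i+j)$, then $\mathcal{S}=\mathcal{E}(\mathcal{B})$ for some strongly disjoint set of bouquets $\mathcal{B}$ of $G$ of type $(i,j)$. (2) Every self semi-disjoint set in $G$ is a self disjoint set. (3) $d_{1,G}=d_{2,G}=d_G$ and $d'_{1,G}=d'_{2,G}=d'_G$.
   Context: A simple graph $G$ is a simple hypergraph all of whose edges have two elements. A bouquet of $G$ is a subgraph with vertex set $\{x,y_1,\dots,y_t\}$, $t\ge1$, and edges $\{x,y_\ell\}$ ($\ell=1,\dots,t$) of $G$; $x$ is the root, the $y_\ell$ are the flowers and the edges $\{x,y_\ell\}$ the stems. A set $\mathcal{B}=\{B_1,\dots,B_j\}$ of bouquets of $G$ is strongly disjoint if the $B_k$ are pairwise vertex-disjoint and one can choose a stem from each $B_k$ so that these stems form an induced matching of $G$; it has type $(i,j)$ if the total number of flowers is $i$ (and $j$ is the number of bouquets). $\mathcal{E}(\mathcal{B})$ denotes the set of all edges of the bouquets in $\mathcal{B}$. $d_G$ (resp. $d'_G$) is the maximum $i$ (resp. maximum $j$) over strongly disjoint sets of bouquets of $G$ of type $(i,j)$. For a family $\mathcal{S}=\{S_1,\dots,S_i\}$ of distinct edges, its type is $(i,j)$ with $j=|\bigcup_\ell S_\ell|$. $\mathcal{S}$ is a semi-induced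 matching if no edge outside $\mathcal{S}$ is contained in $\bigcup_\ell S_\ell$, an induced matching if moreover its edges are pairwise disjoint. $\mathcal{S}$ is a self disjoint set (resp. self semi-disjoint set) if (i) for all $k$, $S_k\nsubseteq\bigcup_{\ell\neq k}S_\ell$, and (ii) there is an induced matching (resp. semi-induced matching) $\mathcal{S}_0\subseteq\mathcal{S}$ such that for each $S_\ell\in\mathcal{S}\setminus\mathcal{S}_0$ there is $S'\in\mathcal{S}_0$ with $|S_\ell\setminus S'|=1$. $d_{1,G}$ (resp. $d_{2,G}$) is the maximum size of a self disjoint (resp. self semi-disjoint) set, and $d'_{1,G}$ (resp. $d'_{2,G}$) is the maximum of $j-i$ over self disjoint (resp. self semi-disjoint) sets of type $(i,j)$. *)

theory Defs
  imports Main
begin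

definition simple_graph :: "'a set \<Rightarrow> 'a set set \<Rightarrow> bool" where
  "simple_graph V E \<longleftrightarrow> finite V \<and> (\<forall>e\<in>E. e \<subseteq> V \<and> card e = 2)"

definition semi_induced_matching :: "'a set set \<Rightarrow> 'a set set \<Rightarrow> bool" where
  "semi_induced_matching E S \<longleftrightarrow> S \<subseteq> E \<and> (\<forall>e\<in>E. e \<subseteq> \<Union>S \<longrightarrow> e \<in> S)"

definition induced_matching :: "'a set set \<Rightarrow> 'a set set \<Rightarrow> bool" where
  "induced_matching E S \<longleftrightarrow> semi_induced_matching E S \<and>
     (\<forall>e\<in>S. \<forall>f\<in>S. e \<noteq> f \<longrightarrow> e \<inter> f = {})"

text \<open>A bouquet is represented by its set of stems (a nonempty set of edges sharing a
  common vertex, the root); its vertex set is the union of the stems, its flowers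
  number is the number of stems.\<close>
definition bouquet :: "'a set set \<Rightarrow> 'a set set \<Rightarrow> bool" where
  "bouquet E B \<longleftrightarrow> B \<noteq> {} \<and> B \<subseteq> E \<and> (\<exists>x. \<forall>e\<in>B. x \<in> e)"

definition strongly_disjoint :: "'a set set \<Rightarrow> 'a set set set \<Rightarrow> bool" where
  "strongly_disjoint E \<B> \<longleftrightarrow>
     (\<forall>B\<in>\<B>. bouquet E B) \<and>
     (\<forall>B\<in>\<B>. \<forall>B'\<in>\<B>. B \<noteq> B' \<longrightarrow> \<Union>B \<inter> \<Union>B' = {}) \<and>
     (\<exists>f. (\<forall>B\<in>\<B>. f B \<in> B) \<and> induced_matching E (f ` \<B>))"

definition bouquets_type :: "'a set set set \<Rightarrow> nat \<times> nat" where
  "bouquets_type \<B> = ((\<Sum>B\<in>\<B>. card B), card \<B>)"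

definition bouquet_edges :: "'a set set set \<Rightarrow> 'a set set" where
  "bouquet_edges \<B> = \<Union>\<B>"

definition family_type :: "'a set set \<Rightarrow> nat \<times> nat" where
  "family_type S = (card S, card (\<Union>S))"

definition self_disjoint :: "'a set set \<Rightarrow> 'a set set \<Rightarrow> bool" where
  "self_disjoint E S \<longleftrightarrow> S \<subseteq> E \<and>
     (\<forall>e\<in>S. \<not> e \<subseteq> \<Union>(S - {e})) \<and>
     (\<exists>S0 \<subseteq> S. induced_matching E S0 \<and>
        (\<forall>e\<in>S - S0. \<exists>e'\<in>S0. card (e - e') = 1))"

definition self_semi_disjoint :: "'a set set \<Rightarrow> 'a set set \<Rightarrow> bool" where
  "self_semi_disjoint E S \<longleftrightarrow> S \<subseteq> E \<and>
     (\<forall>e\<in>S. \<not> e \<subseteq> \<Union>(S - {e})) \<and>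
     (\<exists>S0 \<subseteq> S. semi_induced_matching E S0 \<and>
        (\<forall>e\<in>S - S0. \<exists>e'\<in>S0. card (e - e') = 1))"

definition dG :: "'a set set \<Rightarrow> nat" where
  "dG E = Max {fst (bouquets_type \<B>) | \<B>. strongly_disjoint E \<B>}"

definition dG' :: "'a set set \<Rightarrow> nat" where
  "dG' E = Max {snd (bouquets_type \<B>) | \<B>. strongly_disjoint E \<B>}"

definition d1G :: "'a set set \<Rightarrow> nat" where
  "d1G E = Max {card S | S. self_disjoint E S}"

definition d2G :: "'a set set \<Rightarrow> nat" where
  "d2G E = Max {card S | S. self_semi_disjoint E S}"

definition d1G' :: "'a set set \<Rightarrow> int" where
  "d1G' E = Max {int (snd (family_type S)) - int (fst (family_type S)) | S. self_disjoint E S}"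

definition d2G' :: "'a set set \<Rightarrow> int" where
  "d2G' E = Max {int (snd (family_type S)) - int (fst (family_type S)) | S. self_semi_disjoint E S}"

end

theory Submission
  imports Defs
begin

text \<open>
  A bouquet with root x and t flowers is the star of the t edges {x, y}; it spans t + 1 vertices
  and each flower is a private vertex of its stem. Hence the edge set of a strongly disjoint set
  of bouquets of type (i, j) has i edges on i + j vertices, every edge has a private vertex, and
  every edge meets the chosen induced stem of its bouquet in the root.

  Conversely, let S be self disjoint with induced matching S0. An edge outside S0 meets exactly one
  edge of S0: meeting two disjoint ones would place it inside the union of S0, which is induced.
  Grouping the edges of S around the edges of S0 therefore partitions S, and each group is a
  bouquet whose root is the non-private vertex of its edge in S0; private vertices make the groups
  vertex disjoint.

  A semi-induced S0 may be replaced by a maximal pairwise disjoint subfamily T: an edge of E inside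
  the union of T lies in S0, so by irredundancy in T; and an edge attached to a discarded edge of S0
  passes through its non-private vertex, which lies on an edge of T.
\<close>

lemma card_2_obtain_other:
  assumes "card e = 2" "x \<in> e"
  obtains y where "y \<noteq> x" "e = {x, y}"
  using assms that unfolding card_2_iff by (metis empty_iff insert_commute insert_iff)

lemma doubleton_if_card_2:
  assumes "card e = 2" "x \<in> e" "y \<in> e" "x \<noteq> y"
  shows "e = {x, y}"
  using assms unfolding card_2_iff by auto

lemma card_Diff_eq_1_iff_meets:
  assumes "card e = 2" "card g = 2" "e \<noteq> g"
  shows "card (e - g) = 1 \<longleftrightarrow> e \<inter> g \<noteq> {}"
proof
  assume card_Diff: "card (e - g) = 1"
  show "e \<inter> g \<noteq> {}"
  proof
    assume "e \<inter> g = {}"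
    then have "e - g = e" by blast
    then show False using card_Diff assms(1) by simp
  qed
next
  assume "e \<inter> g \<noteq> {}"
  then obtain x where x: "x \<in> e" "x \<in> g" by blast
  obtain y where y: "y \<noteq> x" "e = {x, y}" using card_2_obtain_other[OF assms(1) x(1)] .
  have "y \<notin> g" using doubleton_if_card_2[OF assms(2) x(2)] y assms(3) by auto
  then have "e - g = {y}" using x y by auto
  then show "card (e - g) = 1" by simp
qed

lemma simple_graph_edges:
  assumes "simple_graph V E"
  shows "finite E" and "\<And>e. e \<in> E \<Longrightarrow> card e = 2"
proof -
  have "E \<subseteq> Pow V" "finite V" using assms unfolding simple_graph_def by auto
  then show "finite E" by (meson finite_Pow_iff finite_subset)
  show "\<And>e. e \<in> E \<Longrightarrow> card e = 2" using assms unfolding simple_graph_def by auto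
qed

lemma induced_matchingD:
  assumes "induced_matching E M"
  shows "\<And>e. e \<in> E \<Longrightarrow> e \<subseteq> \<Union>M \<Longrightarrow> e \<in> M"
    and "\<And>e f. e \<in> M \<Longrightarrow> f \<in> M \<Longrightarrow> e \<noteq> f \<Longrightarrow> e \<inter> f = {}"
  using assms unfolding induced_matching_def semi_induced_matching_def by auto

definition irredundant :: "'a set set \<Rightarrow> bool" where
  "irredundant S \<longleftrightarrow> (\<forall>e\<in>S. \<not> e \<subseteq> \<Union>(S - {e}))"

lemma irredundant_edge_meets_others_in_one_vertex:
  assumes "irredundant S" "e \<in> S" "card e = 2"
  shows "\<exists>u\<in>e. \<forall>g\<in>S - {e}. g \<inter> e \<subseteq> {u}"
proof -
  obtain b where b: "b \<in> e" "b \<notin> \<Union>(S - {e})"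
    using assms(1,2) unfolding irredundant_def by blast
  obtain u where "u \<noteq> b" "e = {b, u}" using card_2_obtain_other[OF assms(3) b(1)] .
  then show ?thesis using b by blast
qed

lemma irredundant_Union:
  assumes "\<And>B. B \<in> \<B> \<Longrightarrow> irredundant B"
    and "\<And>B B'. B \<in> \<B> \<Longrightarrow> B' \<in> \<B> \<Longrightarrow> B \<noteq> B' \<Longrightarrow> \<Union>B \<inter> \<Union>B' = {}"
  shows "irredundant (\<Union>\<B>)"
  unfolding irredundant_def
proof
  fix e assume "e \<in> \<Union>\<B>"
  then obtain B where B: "B \<in> \<B>" "e \<in> B" by blast
  then obtain y where y: "y \<in> e" "y \<notin> \<Union>(B - {e})"
    using assms(1) unfolding irredundant_def by blast
  have "y \<notin> \<Union>B'" if "B' \<in> \<B>" "B' \<noteq> B" for B'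
    using assms(2)[OF B(1) that(1)] that(2) y(1) B(2) by blast
  then have "y \<notin> \<Union>(\<Union>\<B> - {e})" using y(2) by blast
  then show "\<not> e \<subseteq> \<Union>(\<Union>\<B> - {e})" using y(1) by blast
qed

lemma exists_maximal_disjoint_subfamily:
  assumes "finite F"
  shows "\<exists>T\<subseteq>F. pairwise disjnt T \<and> (\<forall>e\<in>F - T. \<exists>g\<in>T. e \<inter> g \<noteq> {})"
  using assms
proof (induction rule: finite_induct)
  case empty
  show ?case by simp
next
  case (insert e F)
  then obtain T where T: "T \<subseteq> F" "pairwise disjnt T" "\<forall>e\<in>F - T. \<exists>g\<in>T. e \<inter> g \<noteq> {}"
    by blast
  show ?case
  proof (cases "\<exists>g\<in>T. e \<inter> g \<noteq> {}")
    case True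
    then show ?thesis using T by (intro exI[of _ T]) auto
  next
    case False
    then have "pairwise disjnt (insert e T)"
      using T(2) by (auto simp: pairwise_insert disjnt_def)
    then show ?thesis using T by (intro exI[of _ "insert e T"]) auto
  qed
qed

lemma induced_matching_disjoint_subfamily:
  assumes "irredundant S" "S0 \<subseteq> S" "semi_induced_matching E S0"
    and "T \<subseteq> S0" "pairwise disjnt T"
  shows "induced_matching E T"
proof -
  have "e \<in> T" if e: "e \<in> E" "e \<subseteq> \<Union>T" for e
  proof (rule ccontr)
    assume "e \<notin> T"
    have "e \<subseteq> \<Union>S0" using e(2) assms(4) by blast
    then have "e \<in> S" using e(1) assms(2,3) unfolding semi_induced_matching_def by blast
    moreover have "e \<subseteq> \<Union>(S - {e})" using e(2) \<open>e \<notin> T\<close> assms(2,4) by blast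
    ultimately show False using assms(1) unfolding irredundant_def by blast
  qed
  then show ?thesis
    using assms(3-5) unfolding induced_matching_def semi_induced_matching_def pairwise_def disjnt_def
    by blast
qed

lemma strongly_disjoint_subset_Pow: "strongly_disjoint E \<B> \<Longrightarrow> \<B> \<subseteq> Pow E"
  unfolding strongly_disjoint_def bouquet_def by auto

lemma finite_strongly_disjoint:
  assumes "finite E"
  shows "finite {\<B>. strongly_disjoint E \<B>}"
proof (rule finite_subset)
  show "{\<B>. strongly_disjoint E \<B>} \<subseteq> Pow (Pow E)" using strongly_disjoint_subset_Pow by blast
  show "finite (Pow (Pow E))" using assms by simp
qed

lemma self_semi_disjoint_if_self_disjoint:
  assumes "self_disjoint E S"
  shows "self_semi_disjoint E S"
proof -
  obtain S0 where S0: "S0 \<subseteq> S" "induced_matching E S0" "\<forall>e\<in>S - S0. \<exists>e'\<in>S0. card (e - e') = 1"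
    using assms unfolding self_disjoint_def by blast
  then have "semi_induced_matching E S0" unfolding induced_matching_def by simp
  then show ?thesis
    using assms S0(1,3) unfolding self_semi_disjoint_def self_disjoint_def by (intro conjI exI[of _ S0]) auto
qed

text \<open>
  For a self disjoint set S with induced matching S0, these are the bouquets recovering S; the
  root of the bouquet at e' is the vertex of e' that is not private.
\<close>
definition bouquet_at :: "'a set set \<Rightarrow> 'a set set \<Rightarrow> 'a set \<Rightarrow> 'a set set" where
  "bouquet_at S S0 e' = {e \<in> S. e = e' \<or> (e \<notin> S0 \<and> e \<inter> e' \<noteq> {})}"

context
  fixes E :: "'a set set"
  assumes card_edge: "\<And>e. e \<in> E \<Longrightarrow> card e = 2"
begin

lemma finite_edge: "e \<in> E \<Longrightarrow> finite e"
  using card_edge by (metis card.infinite zero_neq_numeral)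

lemma attached_iff_meets:
  assumes "S \<subseteq> E" "S0 \<subseteq> S"
  shows "(\<forall>e\<in>S - S0. \<exists>e'\<in>S0. card (e - e') = 1) \<longleftrightarrow>
    (\<forall>e\<in>S - S0. \<exists>e'\<in>S0. e \<inter> e' \<noteq> {})"
proof -
  have "card (e - e') = 1 \<longleftrightarrow> e \<inter> e' \<noteq> {}" if "e \<in> S - S0" "e' \<in> S0" for e e'
    using that assms card_edge card_Diff_eq_1_iff_meets by (metis DiffE subsetD)
  then show ?thesis by (intro ball_cong bex_cong refl) auto
qed

lemma self_disjoint_iff:
  "self_disjoint E S \<longleftrightarrow> S \<subseteq> E \<and> irredundant S \<and>
     (\<exists>S0\<subseteq>S. induced_matching E S0 \<and> (\<forall>e\<in>S - S0. \<exists>e'\<in>S0. e \<inter> e' \<noteq> {}))"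
  unfolding self_disjoint_def irredundant_def by (simp only: attached_iff_meets cong: conj_cong)

lemma self_semi_disjoint_iff:
  "self_semi_disjoint E S \<longleftrightarrow> S \<subseteq> E \<and> irredundant S \<and>
     (\<exists>S0\<subseteq>S. semi_induced_matching E S0 \<and> (\<forall>e\<in>S - S0. \<exists>e'\<in>S0. e \<inter> e' \<noteq> {}))"
  unfolding self_semi_disjoint_def irredundant_def by (simp only: attached_iff_meets cong: conj_cong)

lemma bouquet_eq_star:
  assumes "B \<subseteq> E" "\<And>e. e \<in> B \<Longrightarrow> x \<in> e"
  shows "B = (\<lambda>y. {x, y}) ` (\<Union>B - {x})"
proof (intro equalityI subsetI)
  fix e assume e: "e \<in> B"
  obtain y where "y \<noteq> x" "e = {x, y}"
    using card_2_obtain_other[OF card_edge assms(2)] assms(1) e by blast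
  then show "e \<in> (\<lambda>y. {x, y}) ` (\<Union>B - {x})" using e by blast
next
  fix e assume "e \<in> (\<lambda>y. {x, y}) ` (\<Union>B - {x})"
  then obtain y g where e: "e = {x, y}" and g: "y \<in> g" "g \<in> B" and "y \<noteq> x" by blast
  then have "g = {x, y}"
    using doubleton_if_card_2[OF card_edge assms(2)[OF g(2)] g(1)] assms(1) by blast
  then show "e \<in> B" using e g(2) by simp
qed

lemma card_Union_bouquet:
  assumes "bouquet E B" "finite B"
  shows "card (\<Union>B) = card B + 1"
proof -
  obtain x where B: "B \<noteq> {}" "B \<subseteq> E" "\<And>e. e \<in> B \<Longrightarrow> x \<in> e"
    using assms(1) unfolding bouquet_def by blast
  have fin: "finite (\<Union>B)"
    using assms(2) B(2) finite_edge by blast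
  have x: "x \<in> \<Union>B" using B by blast
  have inj: "inj_on (\<lambda>y. {x, y}) (\<Union>B - {x})" by (auto simp: inj_on_def doubleton_eq_iff)
  have "card B = card ((\<lambda>y. {x, y}) ` (\<Union>B - {x}))"
    using bouquet_eq_star[OF B(2,3)] by (rule arg_cong)
  also have "\<dots> = card (\<Union>B - {x})" using inj by (rule card_image)
  finally show ?thesis using card.remove[OF fin x] by simp
qed

lemma irredundant_bouquet:
  assumes "bouquet E B"
  shows "irredundant B"
  unfolding irredundant_def
proof
  fix e assume e: "e \<in> B"
  obtain x where B: "B \<subseteq> E" "\<And>e. e \<in> B \<Longrightarrow> x \<in> e"
    using assms unfolding bouquet_def by blast
  have "e \<in> (\<lambda>y. {x, y}) ` (\<Union>B - {x})" using bouquet_eq_star[OF B] e by blast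
  then obtain y where y: "y \<noteq> x" "e = {x, y}" by blast
  have "y \<notin> g" if "g \<in> B - {e}" for g
  proof
    assume "y \<in> g"
    then have "g = {x, y}"
      using doubleton_if_card_2[OF card_edge B(2)] B(1) that y(1) by blast
    then show False using that y(2) by blast
  qed
  then show "\<not> e \<subseteq> \<Union>(B - {e})" using y by blast
qed

lemma strongly_disjoint_edge_disjoint:
  assumes "strongly_disjoint E \<B>" "B \<in> \<B>" "B' \<in> \<B>" "B \<noteq> B'"
  shows "B \<inter> B' = {}"
proof -
  have "\<Union>B \<inter> \<Union>B' = {}" "B \<subseteq> E"
    using assms unfolding strongly_disjoint_def bouquet_def by auto
  show ?thesis
  proof (rule ccontr)
    assume "B \<inter> B' \<noteq> {}"
    then obtain e where "e \<in> B" "e \<in> B'" by blast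
    then have "e = {}" "card e = 2" using \<open>\<Union>B \<inter> \<Union>B' = {}\<close> \<open>B \<subseteq> E\<close> card_edge by auto
    then show False by simp
  qed
qed

lemma card_bouquet_edges:
  assumes "finite E" "strongly_disjoint E \<B>"
  shows "card (bouquet_edges \<B>) = (\<Sum>B\<in>\<B>. card B)"
  unfolding bouquet_edges_def
proof (rule card_Union_disjoint)
  show "pairwise disjnt \<B>"
    using strongly_disjoint_edge_disjoint[OF assms(2)] by (auto simp: pairwise_def disjnt_def)
  show "finite B" if "B \<in> \<B>" for B
    using strongly_disjoint_subset_Pow[OF assms(2)] that assms(1) by (meson PowD finite_subset subsetD)
qed

lemma card_vertices_bouquet_edges:
  assumes "finite E" "strongly_disjoint E \<B>"
  shows "card (\<Union>(bouquet_edges \<B>)) = (\<Sum>B\<in>\<B>. card B) + card \<B>"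
proof -
  have sub: "\<B> \<subseteq> Pow E" using strongly_disjoint_subset_Pow[OF assms(2)] .
  then have fin: "finite \<B>" "\<And>B. B \<in> \<B> \<Longrightarrow> finite B"
    using assms(1) by (auto intro: finite_subset)
  have bq: "\<And>B. B \<in> \<B> \<Longrightarrow> bouquet E B"
    and disj: "\<forall>B\<in>\<B>. \<forall>B'\<in>\<B>. B \<noteq> B' \<longrightarrow> \<Union>B \<inter> \<Union>B' = {}"
    using assms(2) unfolding strongly_disjoint_def by auto
  have "\<Union>(bouquet_edges \<B>) = \<Union>(Union ` \<B>)" unfolding bouquet_edges_def by auto
  also have "card \<dots> = (\<Sum>B\<in>\<B>. card (\<Union>B))"
  proof (rule card_UN_disjoint[OF fin(1) _ disj])
    show "\<forall>B\<in>\<B>. finite (\<Union>B)" using fin sub finite_edge by blast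
  qed
  also have "\<dots> = (\<Sum>B\<in>\<B>. card B + 1)" using card_Union_bouquet bq fin by simp
  also have "\<dots> = (\<Sum>B\<in>\<B>. card B) + card \<B>" by (subst sum.distrib) simp
  finally show ?thesis .
qed

lemma family_type_bouquet_edges:
  assumes "finite E" "strongly_disjoint E \<B>" "bouquets_type \<B> = (i, j)"
  shows "family_type (bouquet_edges \<B>) = (i, i + j)"
  using assms card_bouquet_edges card_vertices_bouquet_edges
  unfolding family_type_def bouquets_type_def by simp

lemma self_disjoint_bouquet_edges:
  assumes "strongly_disjoint E \<B>"
  shows "self_disjoint E (bouquet_edges \<B>)"
proof -
  have bq: "\<And>B. B \<in> \<B> \<Longrightarrow> bouquet E B"
    and disj: "\<And>B B'. B \<in> \<B> \<Longrightarrow> B' \<in> \<B> \<Longrightarrow> B \<noteq> B' \<Longrightarrow> \<Union>B \<inter> \<Union>B' = {}"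
    using assms unfolding strongly_disjoint_def by auto
  have "\<exists>f. (\<forall>B\<in>\<B>. f B \<in> B) \<and> induced_matching E (f ` \<B>)"
    using assms unfolding strongly_disjoint_def by simp
  then obtain f where f: "\<And>B. B \<in> \<B> \<Longrightarrow> f B \<in> B" "induced_matching E (f ` \<B>)"
    by blast
  have "\<Union>\<B> \<subseteq> E" using bq unfolding bouquet_def by blast
  moreover have "irredundant (\<Union>\<B>)"
    by (rule irredundant_Union) (use irredundant_bouquet bq disj in auto)
  moreover have "f ` \<B> \<subseteq> \<Union>\<B>" using f(1) by blast
  moreover have "\<exists>e'\<in>f ` \<B>. e \<inter> e' \<noteq> {}" if e: "e \<in> \<Union>\<B>" for e
  proof -
    obtain B where B: "B \<in> \<B>" "e \<in> B" using e by blast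
    then obtain x where "\<And>g. g \<in> B \<Longrightarrow> x \<in> g" using bq unfolding bouquet_def by blast
    then have "x \<in> e \<inter> f B" using B f(1) by blast
    then show ?thesis using B(1) by blast
  qed
  ultimately show ?thesis
    unfolding self_disjoint_iff bouquet_edges_def using f(2) by (intro conjI exI[of _ "f ` \<B>"]) auto
qed

context
  fixes S S0 :: "'a set set"
  assumes S_edges: "S \<subseteq> E" and irredundant_S: "irredundant S"
    and S0_subset: "S0 \<subseteq> S" and S0_matching: "induced_matching E S0"
    and attached: "\<And>e. e \<in> S - S0 \<Longrightarrow> \<exists>e'\<in>S0. e \<inter> e' \<noteq> {}"
begin

lemma meets_at_most_one_matching_edge:
  assumes "e \<in> S - S0" "e1 \<in> S0" "e2 \<in> S0" "e \<inter> e1 \<noteq> {}" "e \<inter> e2 \<noteq> {}"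
  shows "e1 = e2"
proof (rule ccontr)
  assume "e1 \<noteq> e2"
  obtain a b where a: "a \<in> e" "a \<in> e1" and b: "b \<in> e" "b \<in> e2" using assms(4,5) by blast
  have "a \<noteq> b" using induced_matchingD(2)[OF S0_matching assms(2,3) \<open>e1 \<noteq> e2\<close>] a b by blast
  moreover have "card e = 2" using assms(1) S_edges card_edge by blast
  ultimately have "e = {a, b}" using a(1) b(1) by (intro doubleton_if_card_2)
  then have "e \<subseteq> \<Union>S0" using a(2) b(2) assms(2,3) by blast
  then have "e \<in> S0" using induced_matchingD(1)[OF S0_matching] assms(1) S_edges by blast
  then show False using assms(1) by blast
qed

lemma self_mem_bouquet_at: "e' \<in> S0 \<Longrightarrow> e' \<in> bouquet_at S S0 e'"
  using S0_subset unfolding bouquet_at_def by blast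

lemma bouquet_at_disjoint:
  assumes "e1 \<in> S0" "e2 \<in> S0" "e1 \<noteq> e2"
  shows "bouquet_at S S0 e1 \<inter> bouquet_at S S0 e2 = {}"
  using meets_at_most_one_matching_edge assms unfolding bouquet_at_def by blast

lemma inj_on_bouquet_at: "inj_on (bouquet_at S S0) S0"
  using self_mem_bouquet_at bouquet_at_disjoint by (metis disjoint_iff inj_onI)

lemma bouquet_bouquet_at:
  assumes "e' \<in> S0"
  shows "bouquet E (bouquet_at S S0 e')"
proof -
  have e': "e' \<in> S" "card e' = 2" using assms S0_subset S_edges card_edge by auto
  obtain u where u: "u \<in> e'" "\<forall>g\<in>S - {e'}. g \<inter> e' \<subseteq> {u}"
    using irredundant_edge_meets_others_in_one_vertex[OF irredundant_S e'] by blast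
  have "u \<in> g" if "g \<in> bouquet_at S S0 e'" for g
    using that u unfolding bouquet_at_def by blast
  moreover have "bouquet_at S S0 e' \<subseteq> E" using S_edges unfolding bouquet_at_def by blast
  ultimately show ?thesis unfolding bouquet_def using self_mem_bouquet_at[OF assms] by blast
qed

lemma bouquet_at_vertex_cases:
  assumes "e' \<in> S0" "g \<in> bouquet_at S S0 e'" "w \<in> g"
  shows "w \<in> e' \<or> (\<forall>h\<in>S. w \<in> h \<longrightarrow> h = g)"
proof (cases "g = e'")
  case False
  then have g: "g \<in> S" "g \<notin> S0" "g \<inter> e' \<noteq> {}" using assms(2) unfolding bouquet_at_def by auto
  then obtain a where a: "a \<in> g" "a \<in> e'" by blast
  have "card g = 2" using g(1) S_edges card_edge by blast
  then obtain u where u: "\<forall>h\<in>S - {g}. h \<inter> g \<subseteq> {u}"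
    using irredundant_edge_meets_others_in_one_vertex[OF irredundant_S g(1)] by blast
  have "e' \<in> S - {g}" using assms(1) S0_subset g(2) by auto
  then have "a = u" using u a by blast
  have "h = g" if "w \<notin> e'" "h \<in> S" "w \<in> h" for h
    using that u \<open>a = u\<close> a(2) assms(3) by blast
  then show ?thesis by blast
qed (use assms in simp)

lemma bouquet_at_vertex_disjoint:
  assumes "e1 \<in> S0" "e2 \<in> S0" "e1 \<noteq> e2"
  shows "\<Union>(bouquet_at S S0 e1) \<inter> \<Union>(bouquet_at S S0 e2) = {}"
proof -
  have False if g: "g1 \<in> bouquet_at S S0 e1" "g2 \<in> bouquet_at S S0 e2" and w: "w \<in> g1" "w \<in> g2"
    for w g1 g2
  proof -
    have "g1 \<in> S" "g2 \<in> S" using g unfolding bouquet_at_def by auto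
    moreover have "g1 \<noteq> g2" using bouquet_at_disjoint[OF assms] g by blast
    moreover have "e1 \<inter> e2 = {}" using induced_matchingD(2)[OF S0_matching assms] .
    ultimately show False
      using bouquet_at_vertex_cases[OF assms(1) g(1) w(1)] bouquet_at_vertex_cases[OF assms(2) g(2) w(2)] w
      by blast
  qed
  then show ?thesis by blast
qed

lemma Union_bouquet_at: "\<Union>(bouquet_at S S0 ` S0) = S"
proof
  show "\<Union>(bouquet_at S S0 ` S0) \<subseteq> S" unfolding bouquet_at_def by blast
  show "S \<subseteq> \<Union>(bouquet_at S S0 ` S0)"
  proof
    fix e assume e: "e \<in> S"
    show "e \<in> \<Union>(bouquet_at S S0 ` S0)"
    proof (cases "e \<in> S0")
      case True
      then show ?thesis using self_mem_bouquet_at by blast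
    next
      case False
      then obtain e' where "e' \<in> S0" "e \<inter> e' \<noteq> {}" using attached e by blast
      then show ?thesis using e False unfolding bouquet_at_def by blast
    qed
  qed
qed

lemma strongly_disjoint_bouquet_at: "strongly_disjoint E (bouquet_at S S0 ` S0)"
  unfolding strongly_disjoint_def
proof (intro conjI)
  show "\<forall>B\<in>bouquet_at S S0 ` S0. bouquet E B" using bouquet_bouquet_at by blast
  show "\<forall>B\<in>bouquet_at S S0 ` S0. \<forall>B'\<in>bouquet_at S S0 ` S0. B \<noteq> B' \<longrightarrow> \<Union>B \<inter> \<Union>B' = {}"
    using bouquet_at_vertex_disjoint by blast
  let ?f = "inv_into S0 (bouquet_at S S0)"
  have "?f ` bouquet_at S S0 ` S0 = S0" using inj_on_bouquet_at by (simp add: image_image)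
  moreover have "\<forall>B\<in>bouquet_at S S0 ` S0. ?f B \<in> B" using inj_on_bouquet_at self_mem_bouquet_at by simp
  ultimately show
    "\<exists>f. (\<forall>B\<in>bouquet_at S S0 ` S0. f B \<in> B) \<and> induced_matching E (f ` bouquet_at S S0 ` S0)"
    using S0_matching by metis
qed

end

lemma self_disjoint_iff_bouquet_edges:
  "self_disjoint E S \<longleftrightarrow> (\<exists>\<B>. strongly_disjoint E \<B> \<and> S = bouquet_edges \<B>)"
proof
  assume "self_disjoint E S"
  then obtain S0 where "S \<subseteq> E" "irredundant S" "S0 \<subseteq> S" "induced_matching E S0"
    "\<forall>e\<in>S - S0. \<exists>e'\<in>S0. e \<inter> e' \<noteq> {}"
    unfolding self_disjoint_iff by blast
  then show "\<exists>\<B>. strongly_disjoint E \<B> \<and> S = bouquet_edges \<B>"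
    using strongly_disjoint_bouquet_at Union_bouquet_at unfolding bouquet_edges_def by metis
qed (use self_disjoint_bouquet_edges in blast)

lemma bouquets_of_self_disjoint:
  assumes "finite E" "self_disjoint E S" "family_type S = (i, i + j)"
  shows "\<exists>\<B>. strongly_disjoint E \<B> \<and> bouquets_type \<B> = (i, j) \<and> S = bouquet_edges \<B>"
proof -
  obtain \<B> where \<B>: "strongly_disjoint E \<B>" "S = bouquet_edges \<B>"
    using assms(2) self_disjoint_iff_bouquet_edges by blast
  then have "family_type S = (fst (bouquets_type \<B>), fst (bouquets_type \<B>) + snd (bouquets_type \<B>))"
    using family_type_bouquet_edges[OF assms(1) \<B>(1) prod.collapse[symmetric]] by simp
  then have "bouquets_type \<B> = (i, j)" using assms(3) by (simp add: prod_eq_iff)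
  then show ?thesis using \<B> by blast
qed

lemma attached_to_maximal_disjoint_subfamily:
  assumes "S \<subseteq> E" "irredundant S" "S0 \<subseteq> S"
    and attached: "\<forall>e\<in>S - S0. \<exists>e'\<in>S0. e \<inter> e' \<noteq> {}"
    and "T \<subseteq> S0" and maximal: "\<forall>e\<in>S0 - T. \<exists>g\<in>T. e \<inter> g \<noteq> {}"
    and e: "e \<in> S - T"
  shows "\<exists>g\<in>T. e \<inter> g \<noteq> {}"
proof (cases "e \<in> S0")
  case True
  then show ?thesis using maximal e by blast
next
  case False
  then obtain e' where e': "e' \<in> S0" "e \<inter> e' \<noteq> {}" using attached e by blast
  show ?thesis
  proof (cases "e' \<in> T")
    case True
    then show ?thesis using e' by blast
  next
    case e'_discarded: False
    then obtain g where g: "g \<in> T" "e' \<inter> g \<noteq> {}" using maximal e' by blast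
    have "e' \<in> S" "card e' = 2" using e'(1) assms(1,3) card_edge by auto
    then obtain u where u: "\<forall>h\<in>S - {e'}. h \<inter> e' \<subseteq> {u}"
      using irredundant_edge_meets_others_in_one_vertex[OF assms(2)] by blast
    have "g \<in> S - {e'}" "e \<in> S - {e'}" using g(1) assms(3,5) e'_discarded e e'(1) False by auto
    then have "u \<in> g" "u \<in> e" using u g(2) e'(2) by blast+
    then show ?thesis using g(1) by blast
  qed
qed

lemma self_disjoint_if_self_semi_disjoint:
  assumes "finite E" "self_semi_disjoint E S"
  shows "self_disjoint E S"
proof -
  obtain S0 where S: "S \<subseteq> E" "irredundant S" and S0: "S0 \<subseteq> S" "semi_induced_matching E S0"
    and attached: "\<forall>e\<in>S - S0. \<exists>e'\<in>S0. e \<inter> e' \<noteq> {}"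
    using assms(2) unfolding self_semi_disjoint_iff by blast
  have "finite S0" using S0(1) S(1) assms(1) by (meson finite_subset)
  then obtain T where T: "T \<subseteq> S0" "pairwise disjnt T"
    and maximal: "\<forall>e\<in>S0 - T. \<exists>g\<in>T. e \<inter> g \<noteq> {}"
    using exists_maximal_disjoint_subfamily[OF \<open>finite S0\<close>] by blast
  have "induced_matching E T" using S(2) S0 T by (rule induced_matching_disjoint_subfamily)
  moreover have "\<forall>e\<in>S - T. \<exists>g\<in>T. e \<inter> g \<noteq> {}"
    using attached_to_maximal_disjoint_subfamily[OF S S0(1) attached T(1) maximal] by blast
  ultimately show ?thesis
    unfolding self_disjoint_iff using S T(1) S0(1) by (intro conjI exI[of _ T]) auto
qed

lemma self_semi_disjoint_eq_self_disjoint: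
  assumes "finite E"
  shows "self_semi_disjoint E = self_disjoint E"
  using self_disjoint_if_self_semi_disjoint[OF assms] self_semi_disjoint_if_self_disjoint by blast

lemma strongly_disjoint_empty: "strongly_disjoint E {}"
proof -
  have "e \<noteq> {}" if "e \<in> E" for e using card_edge[OF that] by auto
  then show ?thesis unfolding strongly_disjoint_def induced_matching_def semi_induced_matching_def by auto
qed

lemma Collect_self_disjoint_eq_image:
  "{S. self_disjoint E S} = bouquet_edges ` {\<B>. strongly_disjoint E \<B>}"
  using self_disjoint_iff_bouquet_edges by auto

lemma d1G_eq_dG:
  assumes "finite E"
  shows "d1G E = dG E"
proof -
  have "card (bouquet_edges \<B>) = fst (bouquets_type \<B>)" if "strongly_disjoint E \<B>" for \<B>
    using card_bouquet_edges[OF assms that] by (simp add: bouquets_type_def)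
  then have "card ` bouquet_edges ` {\<B>. strongly_disjoint E \<B>}
      = (\<lambda>\<B>. fst (bouquets_type \<B>)) ` {\<B>. strongly_disjoint E \<B>}"
    unfolding image_image by (intro image_cong) auto
  then show ?thesis unfolding d1G_def dG_def setcompr_eq_image Collect_self_disjoint_eq_image
    by (rule arg_cong)
qed

lemma d2G_eq_d1G: "finite E \<Longrightarrow> d2G E = d1G E"
  unfolding d2G_def d1G_def by (simp only: self_semi_disjoint_eq_self_disjoint)

lemma d1G'_eq_dG':
  assumes "finite E"
  shows "d1G' E = int (dG' E)"
proof -
  let ?sd = "{\<B>. strongly_disjoint E \<B>}"
  have "int (snd (family_type (bouquet_edges \<B>))) - int (fst (family_type (bouquet_edges \<B>)))
      = int (snd (bouquets_type \<B>))" if "strongly_disjoint E \<B>" for \<B>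
    using family_type_bouquet_edges[OF assms that prod.collapse[symmetric]] by simp
  then have "(\<lambda>S. int (snd (family_type S)) - int (fst (family_type S))) ` bouquet_edges ` ?sd
      = int ` (\<lambda>\<B>. snd (bouquets_type \<B>)) ` ?sd"
    unfolding image_image by (intro image_cong) auto
  moreover have "finite ((\<lambda>\<B>. snd (bouquets_type \<B>)) ` ?sd)"
    using finite_strongly_disjoint[OF assms] by simp
  moreover have "(\<lambda>\<B>. snd (bouquets_type \<B>)) ` ?sd \<noteq> {}" using strongly_disjoint_empty by blast
  ultimately show ?thesis
    unfolding d1G'_def dG'_def setcompr_eq_image Collect_self_disjoint_eq_image
    by (simp add: mono_Max_commute mono_def)
qed

lemma d2G'_eq_d1G': "finite E \<Longrightarrow> d2G' E = d1G' E"
  unfolding d2G'_def d1G'_def by (simp only: self_semi_disjoint_eq_self_disjoint)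

end

theorem proposition1p4:
  fixes V :: "'a set" and E :: "'a set set"
  assumes "simple_graph V E"
  shows "(\<forall>\<B> i j. strongly_disjoint E \<B> \<and> bouquets_type \<B> = (i, j) \<longrightarrow>
             self_disjoint E (bouquet_edges \<B>) \<and> family_type (bouquet_edges \<B>) = (i, i + j))
       \<and> (\<forall>S i j. self_disjoint E S \<and> family_type S = (i, i + j) \<longrightarrow>
             (\<exists>\<B>. strongly_disjoint E \<B> \<and> bouquets_type \<B> = (i, j) \<and> S = bouquet_edges \<B>))
       \<and> (\<forall>S. self_semi_disjoint E S \<longrightarrow> self_disjoint E S)
       \<and> (d1G E = d2G E \<and> d2G E = dG E)
       \<and> (d1G' E = d2G' E \<and> d2G' E = int (dG' E))"
proof -
  note finite = simple_graph_edges(1)[OF assms]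
    and card_edge = simple_graph_edges(2)[OF assms]
  show ?thesis
    by (intro conjI)
      (use self_disjoint_bouquet_edges[OF card_edge] family_type_bouquet_edges[OF card_edge finite] in blast,
       use bouquets_of_self_disjoint[OF card_edge finite] in blast,
       use self_disjoint_if_self_semi_disjoint[OF card_edge finite] in blast,
       simp_all add: d1G_eq_dG[OF card_edge finite] d2G_eq_d1G[OF card_edge finite]
         d1G'_eq_dG'[OF card_edge finite] d2G'_eq_d1G'[OF card_edge finite])
qed

end
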